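(* Let $n\ge1$, $1\le k\le n$ and $p\in[0,1]$. Consider the unordered search problem on an array $\vec{x}=(x_1,\ldots,x_n)$ of $n$ distinct elements where the target $z$ is chosen uniformly at random among the entries of $\vec{x}$. Then any deterministic algorithm that runs in $k$ rounds and succeeds with probability at least $p$ (over the choice of $z$) asks at least $np\bigl(1-\frac{k-1}{2k}p\bigr)-1$ queries in expectation (over the choice of $z$). Moreover, there is a deterministic algorithm for this problem running in $k$ rounds, succeeding with probability at least $p$, that asks at most $np\bigl(1-\frac{k-1}{2k}p\bigr)+1$ queries in expectation.
   Context: Comparison model: the algorithm may only ask an oracle queries "How is $a$ compared to $b$?" with $a,b\in\{x_1,\ldots,x_n,z\}$, with answer "$<$", "$=$" or "$>$". The goal is to output the index $\ell$ with $z=x_\ell$. An algorithm runs in $k$ rounds if in each of $k$ rounds it submits a set of queries, chosen depending only on answers from earlier rounds, and then receives all their answers. The query count is the total number of queries asked. *)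

theory Defs
  imports Complex_Main
begin

text \<open>An input is an array x (entries x 1, ..., x n, pairwise distinct, drawn from the
  linear order nat) together with the index l of the target, i.e. z = x l.\<close>

datatype item = X nat | Z

datatype answer = Lt | Eq | Gt

type_synonym query = "item \<times> item"

text \<open>The history after some rounds: for each finished round, the partial map
  sending each asked query to its answer.\<close>
type_synonym history = "(query \<Rightarrow> answer option) list"

fun item_val :: "(nat \<Rightarrow> nat) \<Rightarrow> nat \<Rightarrow> item \<Rightarrow> nat" where
  "item_val x l (X i) = x i"
| "item_val x l Z = x l"

definition cmp_answer :: "(nat \<Rightarrow> nat) \<Rightarrow> nat \<Rightarrow> query \<Rightarrow> answer" where
  "cmp_answer x l q =
     (let a = item_val x l (fst q); b = item_val x l (snd q)
      in if a < b then Lt else if a = b then Eq else Gt)"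

definition valid_items :: "nat \<Rightarrow> item set" where
  "valid_items n = insert Z (X ` {1..n})"

definition valid_queries :: "nat \<Rightarrow> query set" where
  "valid_queries n = valid_items n \<times> valid_items n"

text \<open>A deterministic round-based algorithm is a pair (Q, Out): Q maps the history of
  earlier rounds to the (finite) set of queries of the next round; Out maps the final
  history to the output index.\<close>
definition valid_alg :: "nat \<Rightarrow> (history \<Rightarrow> query set) \<Rightarrow> bool" where
  "valid_alg n Q \<longleftrightarrow> (\<forall>h. Q h \<subseteq> valid_queries n)"

fun run_hist :: "(history \<Rightarrow> query set) \<Rightarrow> (nat \<Rightarrow> nat) \<Rightarrow> nat \<Rightarrow> nat \<Rightarrow> history" where
  "run_hist Q x l 0 = []"
| "run_hist Q x l (Suc r) =
     (let h = run_hist Q x l r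
      in h @ [(\<lambda>q. if q \<in> Q h then Some (cmp_answer x l q) else None)])"

definition num_queries :: "(history \<Rightarrow> query set) \<Rightarrow> (nat \<Rightarrow> nat) \<Rightarrow> nat \<Rightarrow> nat \<Rightarrow> nat" where
  "num_queries Q x l k = (\<Sum>r<k. card (Q (run_hist Q x l r)))"

definition succ_prob ::
  "nat \<Rightarrow> nat \<Rightarrow> (history \<Rightarrow> query set) \<Rightarrow> (history \<Rightarrow> nat) \<Rightarrow> (nat \<Rightarrow> nat) \<Rightarrow> real" where
  "succ_prob n k Q Out x = real (card {l \<in> {1..n}. Out (run_hist Q x l k) = l}) / real n"

definition exp_queries ::
  "nat \<Rightarrow> nat \<Rightarrow> (history \<Rightarrow> query set) \<Rightarrow> (nat \<Rightarrow> nat) \<Rightarrow> real" where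
  "exp_queries n k Q x = (\<Sum>l\<in>{1..n}. real (num_queries Q x l k)) / real n"

end

theory Submission
  imports Defs "HOL-Analysis.Convex"
begin

text \<open>
  Upper bound: with m = ceil(n p), cut 1, ..., m into k consecutive blocks of at most
  ceil(m/k) indices and in round r compare z with the entries of block r, stopping once z
  has been found. A target in block g costs s_0 + ... + s_g queries (s_j the block sizes), a
  target beyond m costs m, and 2 \<Sum>_g s_g (s_0 + ... + s_g) = m^2 + \<Sum>_g s_g^2.

  Lower bound: an adversary follows the algorithm along a main branch on which z is larger
  than every entry still in play. After round r, the indices compared with z in that round
  leave the main branch, together with all indices in play that reach them by a chain of
  comparisons asked so far going up in index; every index that leaves owns a distinct query (its
  comparison with z, or the first comparison of its chain), so after r rounds at most
  c_0 + ... + c_(r-1) indices have left, c_j being the number of queries of round j on the main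
  branch. Valuing each entry by the round in which it left, ties broken by index, makes the
  main branch consistent: a target sees the main-branch answers for as long as it has not
  left. So the N_r targets still in play at round r pay c_r each, and the targets never
  leaving all get the same output, whence n - N_k \<ge> n p - 1. Abel summation and the
  Cauchy-Schwarz inequality then bound \<Sum>_r c_r N_r from below.
\<close>

section \<open>Partial sums and two quadratic estimates\<close>

lemma sum_times_partial_sums:
  fixes s :: "nat \<Rightarrow> 'a::comm_semiring_1"
  shows "2 * (\<Sum>g<K. s g * (\<Sum>j\<le>g. s j)) = (\<Sum>g<K. s g)\<^sup>2 + (\<Sum>g<K. (s g)\<^sup>2)"
proof (induction K)
  case (Suc K)
  have "(\<Sum>j\<le>K. s j) = (\<Sum>g<K. s g) + s K"
    by (simp add: lessThan_Suc_atMost[symmetric])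
  with Suc show ?case
    by (simp add: algebra_simps power2_eq_square mult_2 mult_2_right)
qed simp

lemma sum_mult_antitone_le:
  fixes a b w :: "nat \<Rightarrow> real"
  assumes antitone: "\<And>r. r < K \<Longrightarrow> w (Suc r) \<le> w r" and "0 \<le> w K"
    and prefix: "\<And>r. r \<le> K \<Longrightarrow> (\<Sum>j<r. b j) \<le> (\<Sum>j<r. a j)"
  shows "(\<Sum>r<K. b r * w r) \<le> (\<Sum>r<K. a r * w r)"
proof -
  have "(\<Sum>j<R. a j - b j) * w R \<le> (\<Sum>r<R. (a r - b r) * w r)" if "R \<le> K" for R
    using that
  proof (induction R)
    case (Suc R)
    have "0 \<le> (\<Sum>j<Suc R. a j - b j)"
      using prefix[OF Suc.prems] by (simp add: sum_subtractf)
    then have "(\<Sum>j<Suc R. a j - b j) * w (Suc R) \<le> (\<Sum>j<Suc R. a j - b j) * w R"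
      using antitone Suc.prems by (intro mult_left_mono) auto
    with Suc show ?case
      by (simp add: algebra_simps)
  qed simp
  from this[OF order_refl] have "(\<Sum>j<K. a j - b j) * w K \<le> (\<Sum>r<K. (a r - b r) * w r)" .
  moreover have "0 \<le> (\<Sum>j<K. a j - b j) * w K"
    using prefix[of K] \<open>0 \<le> w K\<close> by (simp add: sum_subtractf)
  ultimately show ?thesis
    by (simp add: algebra_simps sum_subtractf)
qed

lemma antitone_sum_mult_lower_bound:
  fixes N c :: "nat \<Rightarrow> real"
  assumes "1 \<le> k"
    and antitone: "\<And>r. r < k \<Longrightarrow> N (Suc r) \<le> N r" and "0 \<le> N k"
    and prefix: "\<And>r. r \<le> k \<Longrightarrow> N 0 - N r \<le> (\<Sum>j<r. c j)"
  shows "N 0 * (N 0 - N k) - (real k - 1) / (2 * real k) * (N 0 - N k)\<^sup>2 \<le> (\<Sum>r<k. c r * N r)"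
proof -
  define s where "s r = N r - N (Suc r)" for r
  define E where "E = N 0 - N k"
  have telescope: "(\<Sum>j<r. s j) = N 0 - N r" for r
    unfolding s_def by (rule sum_lessThan_telescope')
  have "(\<Sum>r<k. s r * N r) = N 0 * E - (\<Sum>r<k. s r * (\<Sum>j\<le>r. s j)) + (\<Sum>r<k. (s r)\<^sup>2)"
  proof -
    have N_eq: "N r = N 0 - (\<Sum>j\<le>r. s j) + s r" for r
      using telescope[of r] by (simp add: lessThan_Suc_atMost[symmetric] s_def)
    have "s r * N r = N 0 * s r - s r * (\<Sum>j\<le>r. s j) + (s r)\<^sup>2" for r
      unfolding N_eq[of r] by (simp add: algebra_simps power2_eq_square)
    then have "(\<Sum>r<k. s r * N r) = (\<Sum>r<k. N 0 * s r - s r * (\<Sum>j\<le>r. s j) + (s r)\<^sup>2)"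
      by presburger
    also have "\<dots> = N 0 * (\<Sum>r<k. s r) - (\<Sum>r<k. s r * (\<Sum>j\<le>r. s j)) + (\<Sum>r<k. (s r)\<^sup>2)"
      by (simp add: sum.distrib sum_subtractf sum_distrib_left)
    finally show ?thesis
      by (simp add: telescope E_def)
  qed
  also have "\<dots> = N 0 * E - E\<^sup>2 / 2 + (\<Sum>r<k. (s r)\<^sup>2) / 2"
    using sum_times_partial_sums[of s k] telescope[of k] by (simp add: E_def)
  also have "\<dots> \<ge> N 0 * E - E\<^sup>2 / 2 + E\<^sup>2 / (2 * real k)"
    using sum_squared_le_sum_of_squares[of s "{..<k}"] telescope[of k] \<open>1 \<le> k\<close>
    by (simp add: E_def field_simps)
  finally have "N 0 * E - (real k - 1) / (2 * real k) * E\<^sup>2 \<le> (\<Sum>r<k. s r * N r)"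
    using \<open>1 \<le> k\<close> by (simp add: field_simps power2_eq_square)
  also have "\<dots> \<le> (\<Sum>r<k. c r * N r)"
    using antitone \<open>0 \<le> N k\<close> by (rule sum_mult_antitone_le) (use prefix telescope in auto)
  finally show ?thesis
    by (simp add: E_def)
qed

lemma quadratic_lower_bound_shift:
  fixes n c P E :: real
  assumes "0 \<le> c" "c \<le> 1 / 2" "0 \<le> P" "P - 1 \<le> E" "0 \<le> E" "E \<le> n"
  shows "n * P - c * P\<^sup>2 - n \<le> n * E - c * E\<^sup>2"
proof -
  have "c * E \<le> 1 / 2 * n"
    using assms by (intro mult_mono) auto
  then have "c * E * E \<le> n * E"
    using assms by (intro mult_right_mono) auto
  then have nonneg: "0 \<le> n * E - c * E\<^sup>2"
    by (simp add: power2_eq_square mult.assoc)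
  show ?thesis
  proof (cases "P \<le> 1")
    case True
    then have "n * P \<le> n"
      using assms by (simp add: mult_left_le)
    moreover have "0 \<le> c * P\<^sup>2"
      using assms by simp
    ultimately show ?thesis
      using nonneg by linarith
  next
    case False
    define T where "T = P - 1"
    have "c * (E + T) \<le> 1 / 2 * (n + n)"
      using assms False by (intro mult_mono) (auto simp: T_def)
    then have "0 \<le> (E - T) * (n - c * (E + T))"
      using assms by (intro mult_nonneg_nonneg) (auto simp: T_def)
    moreover have "0 \<le> c * (2 * P - 1)"
      using assms False by simp
    ultimately show ?thesis
      by (simp add: T_def algebra_simps power2_eq_square)
  qed
qed

lemma quadratic_upper_bound_ceiling:
  fixes n c P m :: real
  assumes "0 \<le> c" "c \<le> 1 / 2" "0 \<le> P" "P \<le> m" "m < P + 1" "m \<le> n"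
  shows "n * m - c * m\<^sup>2 + c * m \<le> n * P - c * P\<^sup>2 + n"
proof -
  define d where "d = m - P"
  have d: "0 \<le> d" "d \<le> 1"
    using assms by (auto simp: d_def)
  have "c * (m * (1 - d)) \<le> 1 * (n * (1 - d))"
    using assms d by (intro mult_mono mult_right_mono) auto
  moreover have "0 \<le> c * (d * P)" "0 \<le> c * (d * d)"
    using assms d by simp_all
  ultimately show ?thesis
    by (simp add: d_def algebra_simps power2_eq_square)
qed

section \<open>A block-scanning algorithm\<close>

lemma length_run_hist [simp]: "length (run_hist Q x l r) = r"
  by (induction r) (auto simp: Let_def)

definition block :: "nat \<Rightarrow> nat \<Rightarrow> nat \<Rightarrow> nat set" where
  "block m k r = {r * m div k <.. min m (Suc r * m div k)}"

lemma block_eq: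
  assumes "r < k"
  shows "block m k r = {r * m div k <.. Suc r * m div k}"
proof -
  have "Suc r * m div k \<le> k * m div k"
    using assms by (intro div_le_mono mult_le_mono1) simp
  then show ?thesis
    using assms by (simp add: block_def min_absorb2)
qed

lemma finite_block [simp]: "finite (block m k r)"
  by (simp add: block_def)

lemma block_subset: "block m k r \<subseteq> {1..m}"
  by (auto simp: block_def)

lemma block_disjoint:
  assumes "i \<in> block m k a" "i \<in> block m k b"
  shows "a = b"
proof -
  have False if "a < b" "i \<in> block m k a" "i \<in> block m k b" for a b
  proof -
    have "Suc a * m div k \<le> b * m div k"
      using that by (intro div_le_mono mult_le_mono1) simp
    with that(2,3) show False
      unfolding block_def by (simp only: greaterThanAtMost_iff) linarith
  qed
  with assms show ?thesis
    by (metis linorder_neqE_nat)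
qed

lemma blocks_cover:
  assumes "K \<le> k"
  shows "(\<Union>r<K. block m k r) = {1..K * m div k}"
  using assms
proof (induction K)
  case (Suc K)
  have "K * m div k \<le> Suc K * m div k"
    by (intro div_le_mono mult_le_mono1) simp
  then show ?case
    using Suc by (auto simp: lessThan_Suc block_eq)
qed simp

lemma card_block_le:
  assumes "r < k"
  shows "k * card (block m k r) \<le> m + k - 1"
proof -
  define A B where "A = Suc r * m" and "B = r * m"
  have "k * (A div k) \<le> A"
    by simp
  moreover have "B = k * (B div k) + B mod k" "B mod k < k"
    using assms by simp_all
  moreover have "A = B + m"
    by (simp add: A_def B_def)
  moreover have "k * card (block m k r) = k * (A div k) - k * (B div k)"
    using assms by (simp add: block_eq A_def B_def diff_mult_distrib2)
  ultimately show ?thesis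
    by linarith
qed

lemma sum_card_blocks:
  assumes "K \<le> k"
  shows "(\<Sum>r<K. card (block m k r)) = K * m div k"
proof -
  have "(\<Sum>r<K. card (block m k r)) = card (\<Union>r<K. block m k r)"
    by (rule card_UN_disjoint[symmetric]) (auto dest: block_disjoint)
  then show ?thesis
    using blocks_cover[OF assms] by simp
qed

lemma sum_squared_card_block_le:
  assumes "1 \<le> k"
  shows "(\<Sum>g<k. (real (card (block m k g)))\<^sup>2) \<le> real m * (real m + real k - 1) / real k"
proof -
  define s where "s g = real (card (block m k g))" for g
  have "(\<Sum>g<k. (s g)\<^sup>2) \<le> (\<Sum>g<k. s g * ((real m + real k - 1) / real k))"
  proof (rule sum_mono)
    fix g assume "g \<in> {..<k}"
    then have "real k * s g \<le> real m + real k - 1"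
      using card_block_le[of g k m] assms unfolding s_def by (simp flip: of_nat_mult)
    then have "s g \<le> (real m + real k - 1) / real k"
      using assms by (simp add: field_simps)
    then show "(s g)\<^sup>2 \<le> s g * ((real m + real k - 1) / real k)"
      by (simp add: power2_eq_square s_def mult_left_mono flip: times_divide_eq_right)
  qed
  also have "\<dots> = real m * (real m + real k - 1) / real k"
    using sum_card_blocks[of k k m] assms unfolding s_def
    by (simp only: sum_distrib_right[symmetric] flip: of_nat_sum) simp
  finally show ?thesis
    unfolding s_def .
qed

definition found :: "history \<Rightarrow> nat \<Rightarrow> bool" where
  "found h i \<longleftrightarrow> (\<exists>j<length h. (h ! j) (Z, X i) = Some Eq)"

definition scan_queries :: "nat \<Rightarrow> nat \<Rightarrow> history \<Rightarrow> query set" where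
  "scan_queries m k h = (if \<exists>i. found h i then {} else (\<lambda>i. (Z, X i)) ` block m k (length h))"

definition scan_output :: "history \<Rightarrow> nat" where
  "scan_output h = (SOME i. found h i)"

lemma found_snoc: "found (h @ [f]) i \<longleftrightarrow> found h i \<or> f (Z, X i) = Some Eq"
proof -
  have "((h @ [f]) ! j) (Z, X i) = (h ! j) (Z, X i)" if "j < length h" for j
    using that by (simp add: nth_append)
  then show ?thesis
    unfolding found_def by (auto simp: Ex_less_Suc)
qed

lemma Z_X_mem_scan_queries:
  "(Z, X i) \<in> scan_queries m k h \<longleftrightarrow> \<not> (\<exists>j. found h j) \<and> i \<in> block m k (length h)"
  by (auto simp: scan_queries_def)

lemma card_scan_queries:
  "card (scan_queries m k h) = (if \<exists>j. found h j then 0 else card (block m k (length h)))"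
  by (simp add: scan_queries_def card_image inj_on_def)

lemma valid_alg_scan_queries: "m \<le> n \<Longrightarrow> valid_alg n (scan_queries m k)"
  using block_subset
  by (fastforce simp: valid_alg_def scan_queries_def valid_queries_def valid_items_def)

context
  fixes n m k :: nat and x :: "nat \<Rightarrow> nat"
  assumes inj: "inj_on x {1..n}" and "m \<le> n"
begin

lemma found_scan:
  assumes l: "l \<in> {1..n}"
  shows "found (run_hist (scan_queries m k) x l r) i \<longleftrightarrow> i = l \<and> (\<exists>g<r. l \<in> block m k g)"
proof (induction r arbitrary: i)
  case (Suc r)
  let ?h = "run_hist (scan_queries m k) x l r"
  have "(Z, X i) \<in> scan_queries m k ?h \<longleftrightarrow> \<not> (\<exists>g<r. l \<in> block m k g) \<and> i \<in> block m k r"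
    using Suc.IH by (simp add: Z_X_mem_scan_queries)
  moreover have "x l = x i \<longleftrightarrow> i = l" if "i \<in> block m k r"
  proof -
    have "i \<in> {1..n}"
      using that block_subset[of m k r] \<open>m \<le> n\<close> by auto
    then show ?thesis
      using inj l by (metis inj_onD)
  qed
  ultimately show ?case
    using Suc.IH by (auto simp: Let_def found_snoc cmp_answer_def less_Suc_eq)
qed (simp add: found_def)

lemma card_scan_round:
  assumes l: "l \<in> {1..n}"
  shows "card (scan_queries m k (run_hist (scan_queries m k) x l r))
     = (if \<exists>g<r. l \<in> block m k g then 0 else card (block m k r))"
  using found_scan[OF l] by (auto simp: card_scan_queries)

lemma num_queries_scan_in_block:
  assumes "l \<in> {1..n}" "g < k" "l \<in> block m k g"
  shows "num_queries (scan_queries m k) x l k = (\<Sum>j\<le>g. card (block m k j))"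
proof -
  have "(\<exists>g'<r. l \<in> block m k g') \<longleftrightarrow> g < r" for r
    using assms block_disjoint by blast
  then have "num_queries (scan_queries m k) x l k = (\<Sum>r<k. if g < r then 0 else card (block m k r))"
    using assms(1) by (simp add: num_queries_def card_scan_round)
  also have "\<dots> = (\<Sum>r\<le>g. card (block m k r))"
    using assms by (intro sum.mono_neutral_cong_right) auto
  finally show ?thesis .
qed

lemma num_queries_scan_outside:
  assumes "l \<in> {1..n}" "1 \<le> k" "m < l"
  shows "num_queries (scan_queries m k) x l k = m"
proof -
  have "l \<notin> block m k g" for g
    using assms block_subset by fastforce
  then show ?thesis
    using sum_card_blocks[of k k m] assms
    by (simp add: num_queries_def card_scan_round[OF assms(1)])
qed

lemma scan_output_correct:
  assumes "l \<in> {1..n}" "1 \<le> k" "l \<le> m"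
  shows "scan_output (run_hist (scan_queries m k) x l k) = l"
proof -
  have "l \<in> (\<Union>g<k. block m k g)"
    using blocks_cover[of k k m] assms by simp
  then show ?thesis
    unfolding scan_output_def found_scan[OF assms(1)] by auto
qed

lemma sum_num_queries_scan:
  assumes "1 \<le> k"
  shows "2 * (\<Sum>l\<in>{1..n}. real (num_queries (scan_queries m k) x l k))
           \<le> (real m)\<^sup>2 + real m * (real m + real k - 1) / real k + 2 * (real n - real m) * real m"
proof -
  define s where "s g = real (card (block m k g))" for g
  have sum_s: "(\<Sum>g<k. s g) = real m"
    using sum_card_blocks[of k k m] assms unfolding s_def by (simp flip: of_nat_sum)
  have split: "{1..n} = (\<Union>g<k. block m k g) \<union> {m<..n}"
    using blocks_cover[of k k m] assms \<open>m \<le> n\<close> by auto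
  have "(\<Sum>l\<in>(\<Union>g<k. block m k g). real (num_queries (scan_queries m k) x l k))
      = (\<Sum>g<k. \<Sum>l\<in>block m k g. real (num_queries (scan_queries m k) x l k))"
    by (rule sum.UNION_disjoint) (auto dest: block_disjoint)
  also have "\<dots> = (\<Sum>g<k. s g * (\<Sum>j\<le>g. s j))"
  proof (rule sum.cong[OF refl])
    fix g assume "g \<in> {..<k}"
    moreover have "l \<in> {1..n}" if "l \<in> block m k g" for l
      using that block_subset \<open>m \<le> n\<close> by fastforce
    ultimately show "(\<Sum>l\<in>block m k g. real (num_queries (scan_queries m k) x l k))
        = s g * (\<Sum>j\<le>g. s j)"
      by (simp add: num_queries_scan_in_block s_def)
  qed
  finally have inside: "2 * (\<Sum>l\<in>(\<Union>g<k. block m k g). real (num_queries (scan_queries m k) x l k))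
      = (real m)\<^sup>2 + (\<Sum>g<k. (s g)\<^sup>2)"
    using sum_times_partial_sums[of s k] sum_s by simp
  have squares: "(\<Sum>g<k. (s g)\<^sup>2) \<le> real m * (real m + real k - 1) / real k"
    using sum_squared_card_block_le[OF assms] unfolding s_def .
  have outside: "(\<Sum>l\<in>{m<..n}. real (num_queries (scan_queries m k) x l k))
      = (real n - real m) * real m"
    using num_queries_scan_outside assms \<open>m \<le> n\<close> by (simp add: of_nat_diff)
  have "(\<Sum>l\<in>{1..n}. real (num_queries (scan_queries m k) x l k))
      = (\<Sum>l\<in>(\<Union>g<k. block m k g). real (num_queries (scan_queries m k) x l k))
        + (\<Sum>l\<in>{m<..n}. real (num_queries (scan_queries m k) x l k))"
    unfolding split using block_subset by (intro sum.union_disjoint) fastforce+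
  then show ?thesis
    using inside squares outside by (simp add: algebra_simps)
qed

end

lemma scan_succ_prob:
  assumes "inj_on x {1..n}" "m \<le> n" "1 \<le> k"
  shows "real m / real n \<le> succ_prob n k (scan_queries m k) scan_output x"
proof -
  have "{1..m} \<subseteq> {l \<in> {1..n}. scan_output (run_hist (scan_queries m k) x l k) = l}"
    using scan_output_correct[OF assms(1,2) _ assms(3)] assms(2) by auto
  then have "m \<le> card {l \<in> {1..n}. scan_output (run_hist (scan_queries m k) x l k) = l}"
    using card_mono[of _ "{1..m}"] by fastforce
  then show ?thesis
    unfolding succ_prob_def by (simp add: divide_right_mono)
qed

lemma scan_exp_queries:
  assumes "inj_on x {1..n}" "m \<le> n" "1 \<le> k" "1 \<le> n"
  defines "c \<equiv> (real k - 1) / (2 * real k)"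
  shows "exp_queries n k (scan_queries m k) x
           \<le> (real n * real m - c * (real m)\<^sup>2 + c * real m) / real n"
proof -
  have identity: "(real m)\<^sup>2 + real m * (real m + real k - 1) / real k
      + 2 * (real n - real m) * real m = 2 * (real n * real m - c * (real m)\<^sup>2 + c * real m)"
    using assms by (simp add: c_def field_simps power2_eq_square)
  have "2 * (\<Sum>l\<in>{1..n}. real (num_queries (scan_queries m k) x l k))
      \<le> 2 * (real n * real m - c * (real m)\<^sup>2 + c * real m)"
    using sum_num_queries_scan[OF assms(1-3)] unfolding identity .
  then have "(\<Sum>l\<in>{1..n}. real (num_queries (scan_queries m k) x l k))
      \<le> real n * real m - c * (real m)\<^sup>2 + c * real m"
    by (simp only: mult_le_cancel_left_pos zero_less_numeral)
  then show ?thesis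
    unfolding exp_queries_def by (rule divide_right_mono) simp
qed

lemma scan_algorithm:
  fixes n k :: nat and p :: real
  assumes "1 \<le> n" "1 \<le> k" "0 \<le> p" "p \<le> 1"
  shows "\<exists>Q Out. valid_alg n Q \<and>
            (\<forall>x. inj_on x {1..n} \<longrightarrow>
                 succ_prob n k Q Out x \<ge> p \<and>
                 exp_queries n k Q x \<le> real n * p * (1 - (real k - 1) / (2 * real k) * p) + 1)"
proof -
  define c where "c = (real k - 1) / (2 * real k)"
  define m where "m = nat \<lceil>real n * p\<rceil>"
  have m: "real n * p \<le> real m" "real m < real n * p + 1" "m \<le> n"
    using assms by (auto simp: m_def mult_left_le nat_le_iff ceiling_le_iff) linarith+
  have c: "0 \<le> c" "c \<le> 1 / 2"
    using assms by (auto simp: c_def field_simps)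
  have succ: "p \<le> real m / real n"
    using m assms by (simp add: field_simps)
  have "real n * real m - c * (real m)\<^sup>2 + c * real m
      \<le> real n * (real n * p) - c * (real n * p)\<^sup>2 + real n"
    using c m assms by (intro quadratic_upper_bound_ceiling) auto
  then have queries: "(real n * real m - c * (real m)\<^sup>2 + c * real m) / real n
      \<le> real n * p * (1 - c * p) + 1"
    using assms by (simp add: field_simps power2_eq_square)
  show ?thesis
  proof (intro exI conjI allI impI)
    show "valid_alg n (scan_queries m k)"
      using m(3) by (rule valid_alg_scan_queries)
    fix x :: "nat \<Rightarrow> nat" assume inj: "inj_on x {1..n}"
    show "p \<le> succ_prob n k (scan_queries m k) scan_output x"
      using scan_succ_prob[OF inj m(3) assms(2)] succ by linarith
    show "exp_queries n k (scan_queries m k) x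
        \<le> real n * p * (1 - (real k - 1) / (2 * real k) * p) + 1"
      using scan_exp_queries[OF inj m(3) assms(2,1)] queries unfolding c_def by linarith
  qed
qed

section \<open>An adversary\<close>

fun owner :: "query \<Rightarrow> nat" where
  "owner (Z, X i) = i"
| "owner (X i, Z) = i"
| "owner (X a, X b) = min a b"
| "owner (Z, Z) = 0"

locale adversary =
  fixes n k :: nat and Q :: "history \<Rightarrow> query set"
  assumes valid: "valid_alg n Q"
begin

definition level :: "(nat \<Rightarrow> nat option) \<Rightarrow> nat \<Rightarrow> nat" where
  "level dep i = (case dep i of Some r \<Rightarrow> r | None \<Rightarrow> k)"

text \<open>An index that left the main branch in round r gets level r, one still in play level k;
  entries are ordered by level first and by index second.\<close>

definition rank :: "(nat \<Rightarrow> nat option) \<Rightarrow> nat \<Rightarrow> nat" where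
  "rank dep i = level dep i * Suc n + i"

definition z_compared :: "history \<Rightarrow> nat \<Rightarrow> bool" where
  "z_compared h b \<longleftrightarrow> (Z, X b) \<in> Q h \<or> (X b, Z) \<in> Q h"

definition x_compared :: "history \<Rightarrow> nat \<Rightarrow> nat \<Rightarrow> bool" where
  "x_compared h a c \<longleftrightarrow> (X a, X c) \<in> Q h \<or> (X c, X a) \<in> Q h"

definition up_edges :: "history \<Rightarrow> (nat \<Rightarrow> nat option) \<Rightarrow> (nat \<times> nat) set" where
  "up_edges h dep = {(a, c). a < c \<and> dep a = None \<and> dep c = None \<and>
                             (\<exists>j\<le>length h. x_compared (take j h) a c)}"

text \<open>Chains go up in index so that a departing index owns the first comparison of its
  chain, see owner.\<close>

definition departing :: "history \<Rightarrow> (nat \<Rightarrow> nat option) \<Rightarrow> nat set" where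
  "departing h dep = {a. dep a = None \<and> (\<exists>b. (a, b) \<in> (up_edges h dep)\<^sup>* \<and> z_compared h b)}"

text \<open>On the main branch, z is a phantom entry at index 0 lying above all entries.\<close>

definition phantom_input :: "(nat \<Rightarrow> nat option) \<Rightarrow> nat \<Rightarrow> nat" where
  "phantom_input dep = (rank dep)(0 := Suc k * Suc n)"

fun main_state :: "nat \<Rightarrow> history \<times> (nat \<Rightarrow> nat option)" where
  "main_state 0 = ([], \<lambda>_. None)"
| "main_state (Suc r) = (case main_state r of (h, dep) \<Rightarrow>
     (h @ [\<lambda>q. if q \<in> Q h then Some (cmp_answer (phantom_input dep) 0 q) else None],
      \<lambda>i. if i \<in> departing h dep then Some r else dep i))"

definition main_hist :: "nat \<Rightarrow> history" where
  "main_hist r = fst (main_state r)"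

definition departure :: "nat \<Rightarrow> nat \<Rightarrow> nat option" where
  "departure r = snd (main_state r)"

definition main_input :: "nat \<Rightarrow> nat \<Rightarrow> nat" where
  "main_input r = phantom_input (departure r)"

definition exit_round :: "nat \<Rightarrow> nat" where
  "exit_round = level (departure k)"

definition adv_array :: "nat \<Rightarrow> nat" where
  "adv_array = rank (departure k)"

lemma main_hist_0 [simp]: "main_hist 0 = []"
  and departure_0 [simp]: "departure 0 = (\<lambda>_. None)"
  by (simp_all add: main_hist_def departure_def)

lemma main_hist_Suc:
  "main_hist (Suc r) = main_hist r @
     [\<lambda>q. if q \<in> Q (main_hist r) then Some (cmp_answer (main_input r) 0 q) else None]"
  unfolding main_input_def departure_def main_hist_def by (simp add: case_prod_beta)

lemma departure_Suc:
  "departure (Suc r) i =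
     (if i \<in> departing (main_hist r) (departure r) then Some r else departure r i)"
  by (simp add: main_hist_def departure_def split: prod.split)

lemma length_main_hist [simp]: "length (main_hist r) = r"
  by (induction r) (simp_all add: main_hist_Suc)

lemma take_main_hist: "j \<le> r \<Longrightarrow> take j (main_hist r) = main_hist j"
  by (induction r) (auto simp: main_hist_Suc le_Suc_eq)

lemma departure_eq_Some_iff:
  "departure r i = Some j \<longleftrightarrow> j < r \<and> i \<in> departing (main_hist j) (departure j)"
proof (induction r)
  case (Suc r)
  have "i \<notin> departing (main_hist r) (departure r)"
    if "j < r" "i \<in> departing (main_hist j) (departure j)"
    using that Suc.IH by (simp add: departing_def)
  then show ?case
    using Suc.IH by (auto simp: departure_Suc less_Suc_eq departing_def)
qed simp

lemma exit_round_le: "exit_round i \<le> k"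
  by (auto simp: exit_round_def level_def departure_eq_Some_iff split: option.split)

lemma exit_round_eq_iff: "r < k \<Longrightarrow> exit_round i = r \<longleftrightarrow> departure k i = Some r"
  by (auto simp: exit_round_def level_def split: option.split)

lemma departing_iff_exit_round:
  "r < k \<Longrightarrow> i \<in> departing (main_hist r) (departure r) \<longleftrightarrow> exit_round i = r"
  by (simp add: exit_round_eq_iff departure_eq_Some_iff)

lemma departure_eq_None_iff:
  assumes "r \<le> k"
  shows "departure r i = None \<longleftrightarrow> r \<le> exit_round i"
proof -
  have "departure r i = None \<longleftrightarrow> \<not> (\<exists>j<r. i \<in> departing (main_hist j) (departure j))"
    by (metis departure_eq_Some_iff not_None_eq)
  also have "\<dots> \<longleftrightarrow> \<not> (\<exists>j<r. exit_round i = j)"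
    using assms by (auto simp: departing_iff_exit_round)
  finally show ?thesis
    by auto
qed

lemma level_departure:
  assumes "r \<le> k"
  shows "level (departure r) i = (if exit_round i < r then exit_round i else k)"
proof (cases "exit_round i < r")
  case True
  then have "departure r i = Some (exit_round i)"
    using assms departing_iff_exit_round by (simp add: departure_eq_Some_iff)
  with True show ?thesis
    by (simp add: level_def)
next
  case False
  then have "departure r i = None"
    using assms by (simp add: departure_eq_None_iff)
  with False show ?thesis
    by (simp add: level_def)
qed

lemma rank_less_iff:
  assumes "a \<le> n" "b \<le> n"
  shows "rank dep a < rank dep b \<longleftrightarrow> level dep a < level dep b \<or> level dep a = level dep b \<and> a < b"
proof -
  have shift: "u * Suc n + a' < v * Suc n + b'" if "u < v" "a' \<le> n" for u v a' b'
  proof -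
    have "Suc u * Suc n \<le> v * Suc n"
      using that by (intro mult_le_mono1) simp
    then show ?thesis
      using that by simp
  qed
  show ?thesis
    unfolding rank_def
    using shift[of "level dep a" "level dep b" a b] shift[of "level dep b" "level dep a" b a] assms
    by (cases "level dep a" "level dep b" rule: linorder_cases) auto
qed

lemma rank_eq_iff: "a \<le> n \<Longrightarrow> b \<le> n \<Longrightarrow> rank dep a = rank dep b \<longleftrightarrow> a = b"
  using rank_less_iff[of a b dep] rank_less_iff[of b a dep] by auto

lemma rank_less_top:
  assumes "a \<le> n" "level dep a \<le> k"
  shows "rank dep a < Suc k * Suc n"
proof -
  have "level dep a * Suc n \<le> k * Suc n"
    using assms(2) by (rule mult_le_mono1)
  then show ?thesis
    using assms by (simp add: rank_def)
qed

lemma X_mem_valid_items: "X b \<in> valid_items n \<longleftrightarrow> b \<in> {1..n}"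
  by (auto simp: valid_items_def)

lemma query_items_valid: "(u, w) \<in> Q h \<Longrightarrow> u \<in> valid_items n \<and> w \<in> valid_items n"
  using valid by (auto simp: valid_alg_def valid_queries_def)

lemma z_compared_valid: "z_compared h b \<Longrightarrow> b \<in> {1..n}"
  using query_items_valid X_mem_valid_items unfolding z_compared_def by blast

lemma x_compared_valid: "x_compared h a c \<Longrightarrow> a \<in> {1..n} \<and> c \<in> {1..n}"
  using query_items_valid X_mem_valid_items unfolding x_compared_def by blast

lemma up_edges_rtrancl:
  "(a, b) \<in> (up_edges h dep)\<^sup>* \<Longrightarrow> a \<le> b \<and> (dep a = None \<longrightarrow> dep b = None)"
  by (induction rule: rtrancl_induct) (auto simp: up_edges_def)

lemma exit_round_le_of_z_compared:
  assumes "r < k" "z_compared (main_hist r) b"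
  shows "exit_round b \<le> r"
proof (rule ccontr)
  assume "\<not> exit_round b \<le> r"
  then have "departure r b = None"
    using assms by (simp add: departure_eq_None_iff)
  then have "b \<in> departing (main_hist r) (departure r)"
    using assms by (auto simp: departing_def)
  then show False
    using \<open>\<not> exit_round b \<le> r\<close> assms departing_iff_exit_round by simp
qed

lemma exit_round_mono_of_x_compared:
  assumes "r < k" "x_compared (main_hist r) a b" "a < b" "r \<le> exit_round a" "r \<le> exit_round b"
  shows "exit_round a \<le> exit_round b"
proof (cases "exit_round b < k \<and> exit_round b < exit_round a")
  case True
  define j where "j = exit_round b"
  have "j < k" "r \<le> j"
    using True assms by (auto simp: j_def)
  then have "departure j a = None" "departure j b = None"
    using True by (simp_all add: departure_eq_None_iff j_def)
  moreover have "x_compared (take r (main_hist j)) a b"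
    using assms \<open>r \<le> j\<close> by (simp add: take_main_hist)
  ultimately have "(a, b) \<in> up_edges (main_hist j) (departure j)"
    using assms \<open>r \<le> j\<close> by (auto simp: up_edges_def)
  moreover have "b \<in> departing (main_hist j) (departure j)"
    using \<open>j < k\<close> departing_iff_exit_round j_def by blast
  ultimately have "a \<in> departing (main_hist j) (departure j)"
    using \<open>departure j a = None\<close> by (auto simp: departing_def intro: converse_rtrancl_into_rtrancl)
  then show ?thesis
    using \<open>j < k\<close> True departing_iff_exit_round j_def by simp
next
  case False
  then show ?thesis
    using exit_round_le[of a] by linarith
qed

lemma departing_witness:
  assumes "r < k" "exit_round l = r"
  obtains b where "l \<le> b" "exit_round b = r" "z_compared (main_hist r) b"
proof -
  obtain b where b: "(l, b) \<in> (up_edges (main_hist r) (departure r))\<^sup>*" "z_compared (main_hist r) b"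
    "departure r l = None"
    using assms departing_iff_exit_round by (auto simp: departing_def)
  then have "l \<le> b" "r \<le> exit_round b"
    using up_edges_rtrancl[OF b(1)] assms by (simp_all add: departure_eq_None_iff)
  with b that show ?thesis
    using exit_round_le_of_z_compared[OF assms(1) b(2)] by simp
qed

lemma adv_array_less_iff:
  "a \<le> n \<Longrightarrow> b \<le> n \<Longrightarrow> adv_array a < adv_array b
     \<longleftrightarrow> exit_round a < exit_round b \<or> exit_round a = exit_round b \<and> a < b"
  unfolding adv_array_def exit_round_def by (rule rank_less_iff)

lemma main_input_less_iff:
  "a \<in> {1..n} \<Longrightarrow> b \<in> {1..n} \<Longrightarrow> main_input r a < main_input r b
     \<longleftrightarrow> level (departure r) a < level (departure r) b \<or>
         level (departure r) a = level (departure r) b \<and> a < b"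
  unfolding main_input_def phantom_input_def by (simp add: rank_less_iff)

lemma main_input_less_top:
  assumes "r \<le> k" "b \<in> {1..n}"
  shows "main_input r b < main_input r 0"
proof -
  have "level (departure r) b \<le> k"
    using assms exit_round_le[of b] by (simp add: level_departure)
  then have "rank (departure r) b < Suc k * Suc n"
    using assms by (intro rank_less_top) auto
  then show ?thesis
    using assms by (simp add: main_input_def phantom_input_def)
qed

lemma order_agrees:
  assumes "r < k" "x_compared (main_hist r) a b" "a < b"
  shows "adv_array a < adv_array b \<longleftrightarrow> main_input r a < main_input r b"
proof -
  have "a \<in> {1..n}" "b \<in> {1..n}"
    using x_compared_valid[OF assms(2)] by auto
  then have "adv_array a < adv_array b \<longleftrightarrow> exit_round a \<le> exit_round b"
    "main_input r a < main_input r b \<longleftrightarrow> level (departure r) a \<le> level (departure r) b"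
    using \<open>a < b\<close> by (auto simp: adv_array_less_iff main_input_less_iff)
  then show ?thesis
    using exit_round_mono_of_x_compared[OF assms] exit_round_le[of a] exit_round_le[of b] assms(1)
    by (auto simp: level_departure)
qed

lemma x_compared_sym: "x_compared h a b \<longleftrightarrow> x_compared h b a"
  by (auto simp: x_compared_def)

lemma cmp_answer_eqI:
  assumes "item_val x l u < item_val x l w \<longleftrightarrow> item_val y m u < item_val y m w"
    and "item_val x l u = item_val x l w \<longleftrightarrow> item_val y m u = item_val y m w"
  shows "cmp_answer x l (u, w) = cmp_answer y m (u, w)"
  using assms by (simp add: cmp_answer_def Let_def)

lemma answers_agree:
  assumes "r < k" "l \<in> {1..n}" "r < exit_round l" "q \<in> Q (main_hist r)"
  shows "cmp_answer adv_array l q = cmp_answer (main_input r) 0 q"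
proof -
  obtain u w where q: "q = (u, w)"
    by fastforce
  have z_below: "adv_array b < adv_array l \<and> main_input r b < main_input r 0"
    if "z_compared (main_hist r) b" for b
    using that assms z_compared_valid[OF that] exit_round_le_of_z_compared[OF assms(1) that]
    by (auto simp: adv_array_less_iff main_input_less_top)
  have x_eq: "adv_array a = adv_array b \<longleftrightarrow> a = b" "main_input r a = main_input r b \<longleftrightarrow> a = b"
    if "x_compared (main_hist r) a b" for a b
    using x_compared_valid[OF that]
    by (simp_all add: adv_array_def main_input_def phantom_input_def rank_eq_iff)
  have x_agree: "adv_array a < adv_array b \<longleftrightarrow> main_input r a < main_input r b"
    if "x_compared (main_hist r) a b" for a b
  proof (cases a b rule: linorder_cases)
    case less
    then show ?thesis
      using order_agrees[OF assms(1) that] by simp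
  next
    case greater
    have "x_compared (main_hist r) b a"
      using that x_compared_sym by blast
    with greater show ?thesis
      using order_agrees[OF assms(1)] x_eq[OF that] by (metis less_not_sym linorder_neqE_nat)
  qed simp
  have "cmp_answer adv_array l (u, w) = cmp_answer (main_input r) 0 (u, w)"
  proof (cases u; cases w)
    fix a b assume "u = X a" "w = X b"
    then show ?thesis
      using assms x_agree x_eq by (intro cmp_answer_eqI) (auto simp: q x_compared_def)
  next
    fix b assume "u = Z" "w = X b"
    then show ?thesis
      using assms z_below[of b] by (intro cmp_answer_eqI) (auto simp: q z_compared_def)
  next
    fix a assume "u = X a" "w = Z"
    then show ?thesis
      using assms z_below[of a] by (intro cmp_answer_eqI) (auto simp: q z_compared_def)
  qed (simp add: cmp_answer_def)
  then show ?thesis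
    by (simp add: q)
qed

lemma answers_differ:
  assumes "r < k" "l \<in> {1..n}" "exit_round l = r"
  obtains q where "q \<in> Q (main_hist r)" "cmp_answer adv_array l q \<noteq> cmp_answer (main_input r) 0 q"
proof -
  obtain b where b: "l \<le> b" "exit_round b = r" "z_compared (main_hist r) b"
    using departing_witness assms by blast
  have "b \<in> {1..n}"
    using z_compared_valid[OF b(3)] .
  then have "\<not> adv_array b < adv_array l" and order: "main_input r b < main_input r 0"
    using assms b main_input_less_top by (auto simp: adv_array_less_iff)
  with b(3) show ?thesis
    unfolding z_compared_def
  proof (elim disjE)
    assume "(Z, X b) \<in> Q (main_hist r)"
    with order \<open>\<not> adv_array b < adv_array l\<close> show ?thesis
      by (intro that[of "(Z, X b)"]) (auto simp: cmp_answer_def Let_def)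
  next
    assume "(X b, Z) \<in> Q (main_hist r)"
    with order \<open>\<not> adv_array b < adv_array l\<close> show ?thesis
      by (intro that[of "(X b, Z)"]) (auto simp: cmp_answer_def Let_def)
  qed
qed

lemma run_hist_adv_array:
  assumes "l \<in> {1..n}" "r \<le> k"
  shows "run_hist Q adv_array l r = main_hist r \<longleftrightarrow> r \<le> exit_round l"
  using assms(2)
proof (induction r)
  case (Suc r)
  let ?h = "run_hist Q adv_array l r"
  have step: "run_hist Q adv_array l (Suc r) = main_hist (Suc r) \<longleftrightarrow>
      ?h = main_hist r \<and> (\<forall>q \<in> Q ?h. cmp_answer adv_array l q = cmp_answer (main_input r) 0 q)"
    by (auto simp: Let_def main_hist_Suc fun_eq_iff split: if_splits)
  consider "Suc r \<le> exit_round l" | "exit_round l = r" | "exit_round l < r"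
    by linarith
  then show ?case
  proof cases
    case 1
    then show ?thesis
      unfolding step using Suc answers_agree[OF _ assms(1)] by simp
  next
    case 2
    then obtain q where "q \<in> Q (main_hist r)"
      "cmp_answer adv_array l q \<noteq> cmp_answer (main_input r) 0 q"
      using answers_differ[OF _ assms(1)] Suc.prems by auto
    with 2 show ?thesis
      unfolding step by auto
  next
    case 3
    then show ?thesis
      unfolding step using Suc by simp
  qed
qed simp

lemma exited_owns_query:
  assumes "j < k" "exit_round l = j"
  shows "\<exists>j'\<le>j. \<exists>q\<in>Q (main_hist j'). owner q = l"
proof -
  obtain b where path: "(l, b) \<in> (up_edges (main_hist j) (departure j))\<^sup>*"
    and "z_compared (main_hist j) b"
    using assms departing_iff_exit_round by (auto simp: departing_def)
  from path show ?thesis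
  proof (cases rule: converse_rtranclE)
    case base
    with \<open>z_compared (main_hist j) b\<close> show ?thesis
      unfolding z_compared_def by force
  next
    case (step c)
    then obtain j' where "j' \<le> j" "l < c" "x_compared (main_hist j') l c"
      by (auto simp: up_edges_def take_main_hist)
    moreover have "owner (X l, X c) = l" "owner (X c, X l) = l"
      using \<open>l < c\<close> by simp_all
    ultimately show ?thesis
      unfolding x_compared_def by blast
  qed
qed

lemma finite_queries: "finite (Q h)"
  using valid by (auto simp: valid_alg_def valid_queries_def valid_items_def intro: finite_subset)

lemma card_exited_le:
  assumes "r \<le> k"
  shows "card {l \<in> {1..n}. exit_round l < r} \<le> (\<Sum>j<r. card (Q (main_hist j)))"
proof -
  let ?S = "SIGMA j:{..<r}. Q (main_hist j)"
  have "{l \<in> {1..n}. exit_round l < r} \<subseteq> (\<lambda>(j, q). owner q) ` ?S"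
  proof
    fix l assume "l \<in> {l \<in> {1..n}. exit_round l < r}"
    then have "exit_round l < r"
      by simp
    then obtain j q where "j < r" "q \<in> Q (main_hist j)" "owner q = l"
      using exited_owns_query[OF _ refl] assms by (meson le_less_trans order.strict_trans2)
    then show "l \<in> (\<lambda>(j, q). owner q) ` ?S"
      by (intro image_eqI[of _ _ "(j, q)"]) auto
  qed
  then have "card {l \<in> {1..n}. exit_round l < r} \<le> card ?S"
    using finite_queries by (intro surj_card_le) auto
  also have "\<dots> = (\<Sum>j<r. card (Q (main_hist j)))"
    using finite_queries by (simp add: card_SigmaI)
  finally show ?thesis .
qed

lemma inj_on_adv_array: "inj_on adv_array {1..n}"
  by (auto simp: inj_on_def adv_array_def rank_eq_iff)

lemma card_survivors:
  "card {l \<in> {1..n}. r \<le> exit_round l} = n - card {l \<in> {1..n}. exit_round l < r}"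
proof -
  have "{l \<in> {1..n}. r \<le> exit_round l} = {1..n} - {l \<in> {1..n}. exit_round l < r}"
    by auto
  also have "card \<dots> = card {1..n} - card {l \<in> {1..n}. exit_round l < r}"
    by (rule card_Diff_subset) auto
  finally show ?thesis
    by simp
qed

lemma sum_num_queries_adv_array_ge:
  "(\<Sum>r<k. real (card (Q (main_hist r))) * real (card {l \<in> {1..n}. r \<le> exit_round l}))
     \<le> (\<Sum>l\<in>{1..n}. real (num_queries Q adv_array l k))"
proof -
  have "(\<Sum>r<k. real (card (Q (main_hist r))) * real (card {l \<in> {1..n}. r \<le> exit_round l}))
      = (\<Sum>l\<in>{1..n}. \<Sum>r<k. if r \<le> exit_round l then real (card (Q (main_hist r))) else 0)"
    (is "?lhs = _")
  proof -
    have "real (card (Q (main_hist r))) * real (card {l \<in> {1..n}. r \<le> exit_round l})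
        = (\<Sum>l\<in>{1..n}. if r \<le> exit_round l then real (card (Q (main_hist r))) else 0)" for r
      by (subst sum.inter_filter[symmetric]) auto
    then have "?lhs = (\<Sum>r<k. \<Sum>l\<in>{1..n}.
        if r \<le> exit_round l then real (card (Q (main_hist r))) else 0)"
      by simp
    also have "\<dots> = (\<Sum>l\<in>{1..n}. \<Sum>r<k. if r \<le> exit_round l then real (card (Q (main_hist r))) else 0)"
      by (rule sum.swap)
    finally show ?thesis .
  qed
  also have "\<dots> \<le> (\<Sum>l\<in>{1..n}. real (num_queries Q adv_array l k))"
  proof (intro sum_mono)
    fix l assume "l \<in> {1..n}"
    then have "run_hist Q adv_array l r = main_hist r" if "r < k" "r \<le> exit_round l" for r
      using that run_hist_adv_array by simp
    then show "(\<Sum>r<k. if r \<le> exit_round l then real (card (Q (main_hist r))) else 0)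
        \<le> real (num_queries Q adv_array l k)"
      unfolding num_queries_def of_nat_sum by (intro sum_mono) auto
  qed
  finally show ?thesis .
qed

lemma card_success_le:
  "card {l \<in> {1..n}. Out (run_hist Q adv_array l k) = l} \<le> card {l \<in> {1..n}. exit_round l < k} + 1"
proof -
  have "{l \<in> {1..n}. Out (run_hist Q adv_array l k) = l}
      \<subseteq> {l \<in> {1..n}. exit_round l < k} \<union> {Out (main_hist k)}"
    using run_hist_adv_array[of _ k] exit_round_le by (fastforce simp: not_less)
  then have "card {l \<in> {1..n}. Out (run_hist Q adv_array l k) = l}
      \<le> card ({l \<in> {1..n}. exit_round l < k} \<union> {Out (main_hist k)})"
    by (intro card_mono) auto
  also have "\<dots> \<le> card {l \<in> {1..n}. exit_round l < k} + 1"
    using card_Un_le[of _ "{Out (main_hist k)}"] by simp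
  finally show ?thesis .
qed

lemma sum_num_queries_adv_array_lower_bound:
  assumes "1 \<le> k"
  defines "E \<equiv> real (card {l \<in> {1..n}. exit_round l < k})"
  shows "real n * E - (real k - 1) / (2 * real k) * E\<^sup>2
           \<le> (\<Sum>l\<in>{1..n}. real (num_queries Q adv_array l k))"
proof -
  define N where "N r = real (card {l \<in> {1..n}. r \<le> exit_round l})" for r
  have "card {l \<in> {1..n}. exit_round l < r} \<le> n" for r
    using card_mono[of "{1..n}" "{l \<in> {1..n}. exit_round l < r}"] by (simp add: subset_iff)
  then have N: "N r = real n - real (card {l \<in> {1..n}. exit_round l < r})" for r
    unfolding N_def card_survivors by (simp add: of_nat_diff)
  have "N 0 * (N 0 - N k) - (real k - 1) / (2 * real k) * (N 0 - N k)\<^sup>2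
      \<le> (\<Sum>r<k. real (card (Q (main_hist r))) * N r)"
  proof (rule antitone_sum_mult_lower_bound[OF assms(1)])
    show "N (Suc r) \<le> N r" for r
      unfolding N_def by (intro of_nat_mono card_mono) auto
    show "N 0 - N r \<le> (\<Sum>j<r. real (card (Q (main_hist j))))" if "r \<le> k" for r
      using card_exited_le[OF that] N[of 0] N[of r] by (simp flip: of_nat_sum)
  qed (simp add: N_def)
  moreover have "N 0 = real n" "N 0 - N k = E"
    using N[of 0] N[of k] by (simp_all add: E_def)
  ultimately show ?thesis
    using sum_num_queries_adv_array_ge unfolding N_def by simp
qed

end

lemma adversary_lower_bound:
  fixes n k :: nat and p :: real
  assumes "1 \<le> n" "1 \<le> k" "0 \<le> p"
  shows "\<forall>Q Out. valid_alg n Q \<and> (\<forall>x. inj_on x {1..n} \<longrightarrow> succ_prob n k Q Out x \<ge> p) \<longrightarrow>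
           (\<exists>x. inj_on x {1..n} \<and>
              exp_queries n k Q x \<ge> real n * p * (1 - (real k - 1) / (2 * real k) * p) - 1)"
proof (intro allI impI, elim conjE)
  fix Q Out
  assume valid: "valid_alg n Q" and succ: "\<forall>x. inj_on x {1..n} \<longrightarrow> succ_prob n k Q Out x \<ge> p"
  interpret adversary n k Q
    using valid by unfold_locales
  define c where "c = (real k - 1) / (2 * real k)"
  define E where "E = real (card {l \<in> {1..n}. exit_round l < k})"
  have "real n * p \<le> real (card {l \<in> {1..n}. Out (run_hist Q adv_array l k) = l})"
    using succ inj_on_adv_array assms(1) by (auto simp: succ_prob_def field_simps)
  then have "real n * p - 1 \<le> E"
    using card_success_le[of Out] unfolding E_def by linarith
  moreover have "E \<le> real n"
    using card_mono[of "{1..n}" "{l \<in> {1..n}. exit_round l < k}"] by (simp add: E_def subset_iff)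
  ultimately have "real n * (real n * p) - c * (real n * p)\<^sup>2 - real n \<le> real n * E - c * E\<^sup>2"
    using assms by (intro quadratic_lower_bound_shift) (auto simp: c_def field_simps E_def)
  also have "\<dots> \<le> (\<Sum>l\<in>{1..n}. real (num_queries Q adv_array l k))"
    using sum_num_queries_adv_array_lower_bound[OF assms(2)] unfolding c_def E_def .
  finally have "real n * p * (1 - c * p) - 1 \<le> exp_queries n k Q adv_array"
    using assms(1) by (simp add: exp_queries_def field_simps power2_eq_square)
  then show "\<exists>x. inj_on x {1..n} \<and>
      exp_queries n k Q x \<ge> real n * p * (1 - (real k - 1) / (2 * real k) * p) - 1"
    using inj_on_adv_array unfolding c_def by blast
qed

theorem theorem2:
  fixes n k :: nat and p :: real
  assumes "n \<ge> 1" and "1 \<le> k" and "k \<le> n" and "0 \<le> p" and "p \<le> 1"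
  shows "(\<forall>Q Out. valid_alg n Q \<and> (\<forall>x. inj_on x {1..n} \<longrightarrow> succ_prob n k Q Out x \<ge> p) \<longrightarrow>
            (\<exists>x. inj_on x {1..n} \<and>
                 exp_queries n k Q x \<ge> real n * p * (1 - (real k - 1) / (2 * real k) * p) - 1))
       \<and> (\<exists>Q Out. valid_alg n Q \<and>
            (\<forall>x. inj_on x {1..n} \<longrightarrow>
                 succ_prob n k Q Out x \<ge> p \<and>
                 exp_queries n k Q x \<le> real n * p * (1 - (real k - 1) / (2 * real k) * p) + 1))"
  using adversary_lower_bound[OF assms(1,2,4)] scan_algorithm[OF assms(1,2,4,5)] by (rule conjI)

end
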